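(* Let $\epsilon>0$, let $\Lambda_\epsilon\subset\mathbb{R}^d$ be an $\epsilon$-lattice with fixed basis $\mathbf{b}_1,\dots,\mathbf{b}_d$, and let $q$ be a positive integer. For any points $\boldsymbol\lambda_1\neq\boldsymbol\lambda_2\in\Lambda_\epsilon$ with $c_q(\boldsymbol\lambda_1)=c_q(\boldsymbol\lambda_2)$, we have $\|\boldsymbol\lambda_1-\boldsymbol\lambda_2\|\ge 2q\epsilon$.
   Context: $\|\cdot\|$ is a fixed one of the $\ell_1,\ell_2,\ell_\infty$ norms, and balls $B_r(\mathbf{x})$ are with respect to it. A lattice is the set of integer combinations of a basis $\mathbf{b}_1,\dots,\mathbf{b}_d$ of $\mathbb{R}^d$. Its packing radius $r_p$ is the supremum of $r$ such that $B_r(\boldsymbol\lambda)\cap B_r(\boldsymbol\lambda')=\emptyset$ for all distinct lattice points; its cover radius $r_c$ is the infimum of $r$ such that the balls $B_r(\boldsymbol\lambda)$ over lattice points cover $\mathbb{R}^d$. An $\epsilon$-lattice is a lattice with $\epsilon=r_p\le r_c\le 3\epsilon$. The coloring $c_q$: writing $\boldsymbol\lambda=\sum_i\alpha_i\mathbf{b}_i$ with $\alpha_i\in\mathbb{Z}$, set $c_q(\boldsymbol\lambda)=(\alpha_1\bmod q,\dots,\alpha_d\bmod q)$. *)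

theory Defs
  imports "HOL-Analysis.Analysis"
begin

datatype normkind = L1 | L2 | Linf

definition pnorm :: "normkind \<Rightarrow> real ^ 'n \<Rightarrow> real" where
  "pnorm k x = (case k of
      L1 \<Rightarrow> (\<Sum>i\<in>UNIV. \<bar>x $ i\<bar>)
    | L2 \<Rightarrow> norm x
    | Linf \<Rightarrow> Max (range (\<lambda>i. \<bar>x $ i\<bar>)))"

definition pball :: "normkind \<Rightarrow> real ^ 'n \<Rightarrow> real \<Rightarrow> (real ^ 'n) set" where
  "pball k x r = {y. pnorm k (y - x) \<le> r}"

definition is_basis :: "('n \<Rightarrow> real ^ 'n) \<Rightarrow> bool" where
  "is_basis b \<longleftrightarrow> inj b \<and> independent (range b) \<and> span (range b) = UNIV"

definition lat_comb :: "('n \<Rightarrow> real ^ 'n) \<Rightarrow> ('n \<Rightarrow> int) \<Rightarrow> real ^ 'n" where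
  "lat_comb b \<alpha> = (\<Sum>i\<in>UNIV. of_int (\<alpha> i) *\<^sub>R b i)"

definition lattice :: "('n \<Rightarrow> real ^ 'n) \<Rightarrow> (real ^ 'n) set" where
  "lattice b = range (lat_comb b)"

definition packing_radius :: "normkind \<Rightarrow> ('n \<Rightarrow> real ^ 'n) \<Rightarrow> real" where
  "packing_radius k b = Sup {r. \<forall>l\<in>lattice b. \<forall>l'\<in>lattice b. l \<noteq> l' \<longrightarrow>
                                   pball k l r \<inter> pball k l' r = {}}"

definition cover_radius :: "normkind \<Rightarrow> ('n \<Rightarrow> real ^ 'n) \<Rightarrow> real" where
  "cover_radius k b = Inf {r. (\<Union>l\<in>lattice b. pball k l r) = UNIV}"

definition eps_lattice :: "normkind \<Rightarrow> real \<Rightarrow> ('n \<Rightarrow> real ^ 'n) \<Rightarrow> bool" where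
  "eps_lattice k \<epsilon> b \<longleftrightarrow> is_basis b \<and> packing_radius k b = \<epsilon> \<and>
     \<epsilon> \<le> cover_radius k b \<and> cover_radius k b \<le> 3 * \<epsilon>"

definition coords :: "('n \<Rightarrow> real ^ 'n) \<Rightarrow> real ^ 'n \<Rightarrow> ('n \<Rightarrow> int)" where
  "coords b l = (THE \<alpha>. lat_comb b \<alpha> = l)"

definition coloring :: "int \<Rightarrow> ('n \<Rightarrow> real ^ 'n) \<Rightarrow> real ^ 'n \<Rightarrow> ('n \<Rightarrow> int)" where
  "coloring q b l = (\<lambda>i. coords b l i mod q)"

end

theory Submission
  imports Defs
begin

text \<open>Equal colours mean that all coordinate differences are divisible by \<open>q\<close>, so
  \<open>l1 - l2 = q v\<close> for a nonzero lattice vector \<open>v\<close>. Two distinct lattice points are at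
  distance at least \<open>2 r\<^sub>p\<close>, since otherwise their midpoint would lie in both packing
  balls; applied to \<open>v\<close> and \<open>0\<close> this gives \<open>\<parallel>l1 - l2\<parallel> = q \<parallel>v\<parallel> \<ge> 2 q \<epsilon>\<close>.\<close>

lemma pnorm_nonneg: "0 \<le> pnorm k x"
proof (cases k)
  case Linf
  have "\<bar>x $ i\<bar> \<le> Max (range (\<lambda>i. \<bar>x $ i\<bar>))" for i by (rule Max_ge) auto
  then have "0 \<le> Max (range (\<lambda>i. \<bar>x $ i\<bar>))" by (meson abs_ge_zero order_trans)
  with Linf show ?thesis by (simp add: pnorm_def)
qed (auto simp: pnorm_def sum_nonneg)

lemma pnorm_scaleR:
  assumes "0 \<le> c"
  shows "pnorm k (c *\<^sub>R x) = c * pnorm k x"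
proof (cases k)
  case Linf
  have "mono ((*) c)" using assms by (simp add: mono_def mult_left_mono)
  then have "c * Max (range (\<lambda>i. \<bar>x $ i\<bar>)) = Max ((*) c ` range (\<lambda>i. \<bar>x $ i\<bar>))"
    by (rule mono_Max_commute) auto
  also have "(*) c ` range (\<lambda>i. \<bar>x $ i\<bar>) = range (\<lambda>i. \<bar>(c *\<^sub>R x) $ i\<bar>)"
    using assms by (auto simp: abs_mult image_image)
  finally show ?thesis using Linf by (simp add: pnorm_def)
qed (use assms in \<open>auto simp: pnorm_def abs_mult sum_distrib_left\<close>)

lemma pnorm_minus: "pnorm k (- x) = pnorm k x"
  by (cases k) (auto simp: pnorm_def)

lemma pnorm_commute: "pnorm k (x - y) = pnorm k (y - x)"
  using pnorm_minus[of k "x - y"] by simp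

lemma pball_empty: "r < 0 \<Longrightarrow> pball k x r = {}"
  using pnorm_nonneg[of k] by (auto simp: pball_def not_le intro: less_le_trans)

lemma pball_disjoint_imp_pnorm_gt:
  assumes "pball k x r \<inter> pball k y r = {}"
  shows "2 * r < pnorm k (x - y)"
proof (rule ccontr)
  assume "\<not> ?thesis"
  then have close: "pnorm k ((1/2) *\<^sub>R (x - y)) \<le> r" "pnorm k ((1/2) *\<^sub>R (y - x)) \<le> r"
    using pnorm_commute[of k x y] by (simp_all add: pnorm_scaleR)
  let ?m = "(1/2) *\<^sub>R (x + y)"
  have "?m - x = (1/2) *\<^sub>R (y - x)" "?m - y = (1/2) *\<^sub>R (x - y)"
    by (simp_all add: vec_eq_iff field_simps)
  then have "?m \<in> pball k x r \<inter> pball k y r"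
    using close by (simp add: pball_def)
  with assms show False by blast
qed

lemma two_packing_radius_le_pnorm:
  assumes "l \<in> lattice b" "l' \<in> lattice b" "l \<noteq> l'"
  shows "2 * packing_radius k b \<le> pnorm k (l - l')"
proof -
  let ?R = "{r. \<forall>l\<in>lattice b. \<forall>l'\<in>lattice b. l \<noteq> l' \<longrightarrow> pball k l r \<inter> pball k l' r = {}}"
  have "-1 \<in> ?R" by (simp add: pball_empty)
  moreover have "r \<le> pnorm k (l - l') / 2" if "r \<in> ?R" for r
    using that assms pball_disjoint_imp_pnorm_gt[of k l r l'] by auto
  ultimately have "packing_radius k b \<le> pnorm k (l - l') / 2"
    unfolding packing_radius_def by (intro cSup_least) auto
  then show ?thesis by simp
qed

lemma lat_comb_zero: "lat_comb b (\<lambda>_. 0) = 0"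
  by (simp add: lat_comb_def)

lemma lat_comb_diff: "lat_comb b \<alpha> - lat_comb b \<beta> = lat_comb b (\<lambda>i. \<alpha> i - \<beta> i)"
  by (simp add: lat_comb_def scaleR_diff_left sum_subtractf)

lemma lat_comb_mult: "lat_comb b (\<lambda>i. q * \<beta> i) = of_int q *\<^sub>R lat_comb b \<beta>"
  by (simp add: lat_comb_def scaleR_sum_right)

lemma inj_lat_comb:
  assumes "is_basis b"
  shows "inj (lat_comb b)"
proof
  fix \<alpha> \<beta> assume eq: "lat_comb b \<alpha> = lat_comb b \<beta>"
  have ind: "independent (range b)" and "inj b" using assms by (auto simp: is_basis_def)
  define c where "c v = real_of_int (\<alpha> (inv b v) - \<beta> (inv b v))" for v
  have "(\<Sum>v\<in>range b. c v *\<^sub>R v) = lat_comb b (\<lambda>i. \<alpha> i - \<beta> i)"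
    using \<open>inj b\<close> by (simp add: sum.reindex lat_comb_def c_def)
  also have "\<dots> = 0" using eq by (simp flip: lat_comb_diff)
  finally have "(\<Sum>v\<in>range b. c v *\<^sub>R v) = 0" .
  then have "c (b i) = 0" for i
    using independentD[OF ind, of "range b" c "b i"] by simp
  then show "\<alpha> = \<beta>" using \<open>inj b\<close> by (auto simp: c_def)
qed

lemma coords_lat_comb: "is_basis b \<Longrightarrow> coords b (lat_comb b \<alpha>) = \<alpha>"
  unfolding coords_def using inj_lat_comb by (blast dest: injD)

lemma same_coloring_imp_diff_multiple:
  assumes "is_basis b" "l1 \<in> lattice b" "l2 \<in> lattice b"
    and "coloring q b l1 = coloring q b l2"
  obtains v where "v \<in> lattice b" "l1 - l2 = of_int q *\<^sub>R v"
proof -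
  obtain \<alpha>1 \<alpha>2 where l: "l1 = lat_comb b \<alpha>1" "l2 = lat_comb b \<alpha>2"
    using assms(2,3) by (auto simp: lattice_def)
  have "\<alpha>1 i mod q = \<alpha>2 i mod q" for i
    using assms(4) unfolding coloring_def l coords_lat_comb[OF assms(1)] by meson
  then have "q dvd \<alpha>1 i - \<alpha>2 i" for i
    by (simp add: mod_eq_dvd_iff)
  then have "\<forall>i. \<exists>t. \<alpha>1 i - \<alpha>2 i = q * t" by (auto simp: dvd_def)
  then obtain \<beta> where "\<And>i. \<alpha>1 i - \<alpha>2 i = q * \<beta> i" by (auto simp: choice_iff)
  then have "l1 - l2 = of_int q *\<^sub>R lat_comb b \<beta>"
    by (simp add: l lat_comb_diff flip: lat_comb_mult)
  then show thesis using that by (auto simp: lattice_def)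
qed

theorem lemma12:
  fixes k :: normkind and \<epsilon> :: real and b :: "'n \<Rightarrow> real ^ 'n" and q :: int
    and l1 l2 :: "real ^ 'n"
  assumes "\<epsilon> > 0" and "eps_lattice k \<epsilon> b" and "q > 0"
    and "l1 \<in> lattice b" and "l2 \<in> lattice b" and "l1 \<noteq> l2"
    and "coloring q b l1 = coloring q b l2"
  shows "pnorm k (l1 - l2) \<ge> 2 * of_int q * \<epsilon>"
proof -
  have basis: "is_basis b" and rp: "packing_radius k b = \<epsilon>"
    using assms(2) by (auto simp: eps_lattice_def)
  obtain v where v: "v \<in> lattice b" and diff: "l1 - l2 = of_int q *\<^sub>R v"
    using same_coloring_imp_diff_multiple[OF basis assms(4,5,7)] .
  have "0 \<in> lattice b" "v \<noteq> 0"
    using lat_comb_zero[of b] diff assms(6) by (auto simp: lattice_def)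
  then have "2 * \<epsilon> \<le> pnorm k v"
    using two_packing_radius_le_pnorm[OF v, of 0 k] rp by simp
  then show ?thesis
    using assms(3) by (simp add: diff pnorm_scaleR)
qed

end
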